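(* Let $L$ be an i--lattice and let $\theta\in{\rm Con}(L)$ be such that every $\alpha\in{\rm Con}(L)$ satisfies $\alpha\subseteq\theta$ or $\theta\subseteq\alpha$. Then $\theta\in{\rm Con}_{\mathbb{I}}(L)$.
   Context: An i--lattice is a lattice $L$ with a unary operation $'$ such that $a''=a$ and $a\leq b$ implies $b'\leq a'$ for all $a,b\in L$. ${\rm Con}(L)$ is the lattice of lattice congruences of $L$, and ${\rm Con}_{\mathbb{I}}(L)$ is the set of lattice congruences $\theta$ that also preserve the involution, i.e. $(a,b)\in\theta$ implies $(a',b')\in\theta$. *)

theory Defs
  imports Main
begin

definition i_lattice :: "('a::lattice \<Rightarrow> 'a) \<Rightarrow> bool" where
  "i_lattice neg \<longleftrightarrow> (\<forall>a. neg (neg a) = a) \<and> (\<forall>a b. a \<le> b \<longrightarrow> neg b \<le> neg a)"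

definition lattice_congruences :: "('a::lattice \<times> 'a) set set" where
  "lattice_congruences = {\<theta>. equiv UNIV \<theta> \<and>
     (\<forall>a b c d. (a, b) \<in> \<theta> \<and> (c, d) \<in> \<theta> \<longrightarrow>
        (sup a c, sup b d) \<in> \<theta> \<and> (inf a c, inf b d) \<in> \<theta>)}"

definition i_congruences :: "('a::lattice \<Rightarrow> 'a) \<Rightarrow> ('a \<times> 'a) set set" where
  "i_congruences neg = {\<theta>. \<theta> \<in> lattice_congruences \<and>
     (\<forall>a b. (a, b) \<in> \<theta> \<longrightarrow> (neg a, neg b) \<in> \<theta>)}"

end

theory Submission
  imports Defs
begin

text \<open>The involution turns every lattice congruence \<open>\<alpha>\<close> into its mirror image
\<open>inv_image \<alpha> neg\<close>, again a lattice congruence, and mirroring twice gives \<open>\<alpha>\<close> back.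
Since mirroring is monotone, \<open>\<theta>\<close> and its mirror are comparable only if they are equal,
and \<open>\<theta> \<subseteq> inv_image \<theta> neg\<close> says precisely that \<open>\<theta>\<close> preserves the involution.\<close>

lemma i_lattice_neg_neg: "i_lattice neg \<Longrightarrow> neg (neg a) = a"
  unfolding i_lattice_def by blast

lemma i_lattice_neg_le_neg_iff:
  assumes "i_lattice neg"
  shows "neg a \<le> neg b \<longleftrightarrow> b \<le> a"
  using assms unfolding i_lattice_def by metis

lemma i_lattice_neg_sup:
  assumes "i_lattice neg"
  shows "neg (sup a b) = inf (neg a) (neg b)"
proof (rule antisym)
  note neg_le = i_lattice_neg_le_neg_iff[OF assms]
  show "neg (sup a b) \<le> inf (neg a) (neg b)"
    by (simp add: neg_le)
  have "sup a b \<le> neg (inf (neg a) (neg b))"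
    by (metis neg_le i_lattice_neg_neg[OF assms] inf_le1 inf_le2 sup_least)
  then show "inf (neg a) (neg b) \<le> neg (sup a b)"
    by (metis neg_le i_lattice_neg_neg[OF assms])
qed

lemma i_lattice_neg_inf:
  assumes "i_lattice neg"
  shows "neg (inf a b) = sup (neg a) (neg b)"
  by (metis assms i_lattice_neg_neg i_lattice_neg_sup)

lemma equiv_UNIV_inv_image: "equiv UNIV r \<Longrightarrow> equiv UNIV (inv_image r f)"
  unfolding equiv_def by (auto simp: refl_on_def intro: sym_inv_image trans_inv_image)

lemma inv_image_dual_hom_in_lattice_congruences:
  fixes f :: "'a::lattice \<Rightarrow> 'b::lattice"
  assumes "\<alpha> \<in> lattice_congruences"
    and "\<And>a b. f (sup a b) = inf (f a) (f b)"
    and "\<And>a b. f (inf a b) = sup (f a) (f b)"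
  shows "inv_image \<alpha> f \<in> lattice_congruences"
  using assms unfolding lattice_congruences_def by (auto intro: equiv_UNIV_inv_image)

lemma inv_image_involution: "(\<And>a. f (f a) = a) \<Longrightarrow> inv_image (inv_image r f) f = r"
  by (simp add: inv_image_def)

lemma inv_image_mono: "r \<subseteq> s \<Longrightarrow> inv_image r f \<subseteq> inv_image s f"
  by auto

theorem proposition4p6:
  fixes neg :: "'a::lattice \<Rightarrow> 'a" and \<theta> :: "('a \<times> 'a) set"
  assumes "i_lattice neg"
    and "\<theta> \<in> lattice_congruences"
    and "\<forall>\<alpha>\<in>lattice_congruences. \<alpha> \<subseteq> \<theta> \<or> \<theta> \<subseteq> \<alpha>"
  shows "\<theta> \<in> i_congruences neg"
proof -
  have "inv_image \<theta> neg \<in> lattice_congruences"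
    using assms(1,2) i_lattice_neg_sup i_lattice_neg_inf
    by (blast intro: inv_image_dual_hom_in_lattice_congruences)
  with assms(3) have "inv_image \<theta> neg \<subseteq> \<theta> \<or> \<theta> \<subseteq> inv_image \<theta> neg"
    by blast
  moreover have "inv_image \<theta> neg \<subseteq> \<theta> \<Longrightarrow> \<theta> \<subseteq> inv_image \<theta> neg"
    using inv_image_mono inv_image_involution i_lattice_neg_neg[OF assms(1)] by metis
  ultimately have "\<theta> \<subseteq> inv_image \<theta> neg"
    by blast
  with assms(2) show ?thesis
    unfolding i_congruences_def by auto
qed

end
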